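(* Let $\gamma\in(0,1)$, and let $\hat c^1,\hat c^2,\dots$ be i.i.d. real random variables with mean $c$ and variance $\sigma^2\in(0,\infty)$. Fix $n\ge2$ and deterministic stepsizes $\alpha_0,\dots,\alpha_{n-2}\in[0,1]$. Define $\bar v^0=0$ and, for $1\le m\le n-1$, $\hat v^m=\hat c^m+\gamma\bar v^{m-1}$, $\bar v^m=(1-\alpha_{m-1})\bar v^{m-1}+\alpha_{m-1}\hat v^m$; let $\hat v^n=\hat c^n+\gamma\bar v^{n-1}$ and, for $a\in\mathbb{R}$, $\bar v^n(a)=(1-a)\bar v^{n-1}+a\hat v^n$. Define $\delta^1=\alpha_0$, $\lambda^1=\alpha_0^2$ and, for $1<m\le n-1$, $\delta^m=\alpha_{m-1}+(1-(1-\gamma)\alpha_{m-1})\delta^{m-1}$, $\lambda^m=\alpha_{m-1}^2+(1-(1-\gamma)\alpha_{m-1})^2\lambda^{m-1}$. Then the value of $a\in[0,1]$ minimizing $\mathbb{E}\big[(\bar v^n(a)-\mathbb{E}\hat v^n)^2\big]$ is $$\alpha_{n-1}=\frac{(1-\gamma)\lambda^{n-1}\sigma^2+\big(1-(1-\gamma)\delta^{n-1}\big)^2c^2}{(1-\gamma)^2\lambda^{n-1}\sigma^2+\big(1-(1-\gamma)\delta^{n-1}\big)^2c^2+\sigma^2}.$$ *)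

theory Defs
  imports "HOL-Probability.Probability"
begin

fun vbar :: "real \<Rightarrow> (nat \<Rightarrow> real) \<Rightarrow> (nat \<Rightarrow> 'a \<Rightarrow> real) \<Rightarrow> nat \<Rightarrow> 'a \<Rightarrow> real" where
  "vbar g al X 0 = (\<lambda>\<omega>. 0)"
| "vbar g al X (Suc m) =
     (\<lambda>\<omega>. (1 - al m) * vbar g al X m \<omega> + al m * (X (Suc m) \<omega> + g * vbar g al X m \<omega>))"

definition vhat :: "real \<Rightarrow> (nat \<Rightarrow> real) \<Rightarrow> (nat \<Rightarrow> 'a \<Rightarrow> real) \<Rightarrow> nat \<Rightarrow> 'a \<Rightarrow> real" where
  "vhat g al X m = (\<lambda>\<omega>. X m \<omega> + g * vbar g al X (m - 1) \<omega>)"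

definition vbar_last :: "real \<Rightarrow> (nat \<Rightarrow> real) \<Rightarrow> (nat \<Rightarrow> 'a \<Rightarrow> real) \<Rightarrow> nat \<Rightarrow> real \<Rightarrow> 'a \<Rightarrow> real" where
  "vbar_last g al X n a = (\<lambda>\<omega>. (1 - a) * vbar g al X (n - 1) \<omega> + a * vhat g al X n \<omega>)"

text \<open>delta and lambda sequences; index 0 is an auxiliary value 0 so that
  delta 1 = alpha_0 and lambda 1 = alpha_0^2 as in the paper.\<close>
fun delta :: "real \<Rightarrow> (nat \<Rightarrow> real) \<Rightarrow> nat \<Rightarrow> real" where
  "delta g al 0 = 0"
| "delta g al (Suc m) = al m + (1 - (1 - g) * al m) * delta g al m"

fun lam :: "real \<Rightarrow> (nat \<Rightarrow> real) \<Rightarrow> nat \<Rightarrow> real" where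
  "lam g al 0 = 0"
| "lam g al (Suc m) = (al m)\<^sup>2 + (1 - (1 - g) * al m)\<^sup>2 * lam g al m"

end

theory Submission
  imports Defs
begin

(* Centring the noise, vbar^m - c delta^m is a linear filter of the centred samples:
   it has mean zero, variance sigma^2 lambda^m, and is uncorrelated with all later samples.
   The error of vbar^n(a) therefore splits orthogonally into (1 - (1 - gamma) a) times
   that filter, a times the fresh centred sample, and the deterministic bias
   (a - 1) c (1 - (1 - gamma) delta^(n-1)). Its mean square is a quadratic in a with
   positive leading coefficient, minimised at the stated alpha_(n-1); this lies in [0,1]
   because lambda^m (1 - gamma^2) <= 1 as long as all earlier stepsizes lie in [0,1]. *)

lemma vbar_Suc_eq:
  "vbar g al X (Suc m) \<omega> = (1 - (1 - g) * al m) * vbar g al X m \<omega> + al m * X (Suc m) \<omega>"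
  by (simp add: algebra_simps)

lemma vbar_add_const:
  "vbar g al (\<lambda>i \<omega>. X i \<omega> + c) m \<omega> = vbar g al X m \<omega> + c * delta g al m"
  by (induction m) (simp_all only: vbar_Suc_eq delta.simps vbar.simps, simp_all add: algebra_simps)

lemma lam_nonneg: "0 \<le> lam g al m"
  by (induction m) simp_all

(* With b = 1 - g, so that 1 - g^2 = b (2 - b), the step t \<mapsto> x^2 + (1 - b x)^2 t
   preserves t b (2 - b) \<le> 1 for x \<in> [0,1]. *)
lemma lam_mult_one_minus_square_le_1:
  assumes "g \<le> 1" and "\<And>k. k < m \<Longrightarrow> al k \<in> {0..1}"
  shows "lam g al m * (1 - g\<^sup>2) \<le> 1"
  using assms(2)
proof (induction m)
  case (Suc m)
  define b x where "b = 1 - g" and "x = al m"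
  have b: "0 \<le> b" and x: "0 \<le> x" "x \<le> 1"
    using assms(1) Suc.prems[of m] by (auto simp: b_def x_def)
  have IH: "lam g al m * (1 - g\<^sup>2) \<le> 1" using Suc by simp
  have "lam g al (Suc m) * (1 - g\<^sup>2) = x\<^sup>2 * (1 - g\<^sup>2) + (1 - b * x)\<^sup>2 * (lam g al m * (1 - g\<^sup>2))"
    by (simp add: b_def x_def algebra_simps)
  also have "\<dots> \<le> x\<^sup>2 * (1 - g\<^sup>2) + (1 - b * x)\<^sup>2"
    using IH by (simp add: mult_left_le)
  also have "\<dots> = 1 - 2 * b * x * (1 - x)"
    by (simp add: b_def power2_eq_square algebra_simps)
  also have "\<dots> \<le> 1"
    using b x by simp
  finally show ?case .
qed simp

lemma integrable_mult_of_squares: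
  fixes f g :: "'a \<Rightarrow> real"
  assumes "f \<in> borel_measurable M" "g \<in> borel_measurable M"
    and "integrable M (\<lambda>x. (f x)\<^sup>2)" "integrable M (\<lambda>x. (g x)\<^sup>2)"
  shows "integrable M (\<lambda>x. f x * g x)"
proof (rule Bochner_Integration.integrable_bound)
  show "integrable M (\<lambda>x. (f x)\<^sup>2 + (g x)\<^sup>2)" using assms by simp
  show "AE x in M. norm (f x * g x) \<le> norm ((f x)\<^sup>2 + (g x)\<^sup>2)"
  proof (rule AE_I2)
    fix x
    have "2 * (\<bar>f x\<bar> * \<bar>g x\<bar>) \<le> (f x)\<^sup>2 + (g x)\<^sup>2"
      using sum_squares_bound[of "\<bar>f x\<bar>" "\<bar>g x\<bar>"] by simp
    moreover have "0 \<le> \<bar>f x\<bar> * \<bar>g x\<bar>"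
      by simp
    ultimately show "norm (f x * g x) \<le> norm ((f x)\<^sup>2 + (g x)\<^sup>2)"
      unfolding real_norm_def abs_mult by linarith
  qed
qed (use assms in simp)

lemma (in finite_measure) square_integrable_affine_comb:
  fixes f g :: "'a \<Rightarrow> real"
  assumes "f \<in> borel_measurable M" "g \<in> borel_measurable M"
    and "integrable M (\<lambda>x. (f x)\<^sup>2)" "integrable M (\<lambda>x. (g x)\<^sup>2)"
  shows "integrable M (\<lambda>x. (u * f x + v * g x + w)\<^sup>2)"
proof -
  have "integrable M f" "integrable M g" "integrable M (\<lambda>x. f x * g x)"
    using assms square_integrable_imp_integrable integrable_mult_of_squares by auto
  moreover have expand: "(\<lambda>x. (u * f x + v * g x + w)\<^sup>2) = (\<lambda>x. u\<^sup>2 * (f x)\<^sup>2 + v\<^sup>2 * (g x)\<^sup>2 + w\<^sup>2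
      + 2 * u * v * (f x * g x) + 2 * u * w * f x + 2 * v * w * g x)"
    by (simp add: fun_eq_iff power2_eq_square algebra_simps)
  ultimately show ?thesis
    unfolding expand using assms by auto
qed

lemma (in prob_space) integral_square_orthogonal_sum:
  fixes f g :: "'a \<Rightarrow> real"
  assumes "f \<in> borel_measurable M" "g \<in> borel_measurable M"
    and "integrable M (\<lambda>x. (f x)\<^sup>2)" "integrable M (\<lambda>x. (g x)\<^sup>2)"
    and "(\<integral>x. f x \<partial>M) = 0" "(\<integral>x. g x \<partial>M) = 0" "(\<integral>x. f x * g x \<partial>M) = 0"
  shows "(\<integral>x. (u * f x + v * g x + w)\<^sup>2 \<partial>M) = u\<^sup>2 * (\<integral>x. (f x)\<^sup>2 \<partial>M) + v\<^sup>2 * (\<integral>x. (g x)\<^sup>2 \<partial>M) + w\<^sup>2"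
proof -
  have "integrable M f" "integrable M g" "integrable M (\<lambda>x. f x * g x)"
    using assms square_integrable_imp_integrable integrable_mult_of_squares by auto
  moreover have expand: "(\<lambda>x. (u * f x + v * g x + w)\<^sup>2) = (\<lambda>x. u\<^sup>2 * (f x)\<^sup>2 + v\<^sup>2 * (g x)\<^sup>2 + w\<^sup>2
      + 2 * u * v * (f x * g x) + 2 * u * w * f x + 2 * v * w * g x)"
    by (simp add: fun_eq_iff power2_eq_square algebra_simps)
  ultimately show ?thesis
    unfolding expand using assms by (simp add: prob_space)
qed

lemma (in prob_space) indep_vars_integral_mult:
  fixes X :: "'i \<Rightarrow> 'a \<Rightarrow> real"
  assumes "indep_vars (\<lambda>_. borel) X I" "i \<in> I" "j \<in> I" "i \<noteq> j"
    and "integrable M (X i)" "integrable M (X j)"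
  shows "(\<integral>\<omega>. X i \<omega> * X j \<omega> \<partial>M) = (\<integral>\<omega>. X i \<omega> \<partial>M) * (\<integral>\<omega>. X j \<omega> \<partial>M)"
proof -
  have "indep_vars (\<lambda>_. borel) X {i, j}"
    by (rule indep_vars_subset[OF assms(1)]) (use assms in auto)
  then have "(\<integral>\<omega>. (\<Prod>k\<in>{i, j}. X k \<omega>) \<partial>M) = (\<Prod>k\<in>{i, j}. \<integral>\<omega>. X k \<omega> \<partial>M)"
    by (rule indep_vars_lebesgue_integral[rotated]) (use assms in auto)
  then show ?thesis
    using assms(4) by simp
qed

locale white_noise = prob_space +
  fixes Y :: "nat \<Rightarrow> 'a \<Rightarrow> real" and \<sigma> :: real
  assumes noise_measurable: "\<And>i. 1 \<le> i \<Longrightarrow> Y i \<in> borel_measurable M"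
    and noise_square_integrable: "\<And>i. 1 \<le> i \<Longrightarrow> integrable M (\<lambda>\<omega>. (Y i \<omega>)\<^sup>2)"
    and noise_mean: "\<And>i. 1 \<le> i \<Longrightarrow> (\<integral>\<omega>. Y i \<omega> \<partial>M) = 0"
    and noise_variance: "\<And>i. 1 \<le> i \<Longrightarrow> (\<integral>\<omega>. (Y i \<omega>)\<^sup>2 \<partial>M) = \<sigma>\<^sup>2"
    and noise_uncorrelated: "\<And>i j. 1 \<le> i \<Longrightarrow> i < j \<Longrightarrow> (\<integral>\<omega>. Y i \<omega> * Y j \<omega> \<partial>M) = 0"
begin

lemma noise_integrable: "1 \<le> i \<Longrightarrow> integrable M (Y i)"
  using noise_measurable noise_square_integrable by (rule square_integrable_imp_integrable)

lemma vbar_measurable: "vbar g al Y m \<in> borel_measurable M"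
proof (induction m)
  case (Suc m)
  then show ?case
    using noise_measurable[of "Suc m"] by auto
qed simp

lemma vbar_square_integrable: "integrable M (\<lambda>\<omega>. (vbar g al Y m \<omega>)\<^sup>2)"
proof (induction m)
  case (Suc m)
  have "integrable M (\<lambda>\<omega>. ((1 - (1 - g) * al m) * vbar g al Y m \<omega> + al m * Y (Suc m) \<omega> + 0)\<^sup>2)"
    using vbar_measurable noise_measurable Suc noise_square_integrable
    by (intro square_integrable_affine_comb) auto
  then show ?case
    by (simp only: vbar_Suc_eq add_0_right)
qed simp

lemma vbar_integrable: "integrable M (vbar g al Y m)"
  using vbar_measurable vbar_square_integrable by (rule square_integrable_imp_integrable)

lemma vbar_mean: "(\<integral>\<omega>. vbar g al Y m \<omega> \<partial>M) = 0"
proof (induction m)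
  case (Suc m)
  then show ?case
    using vbar_integrable noise_integrable noise_mean by (simp add: vbar_Suc_eq)
qed simp

lemma vbar_uncorrelated_future: "m < j \<Longrightarrow> (\<integral>\<omega>. vbar g al Y m \<omega> * Y j \<omega> \<partial>M) = 0"
proof (induction m)
  case (Suc m)
  have "integrable M (\<lambda>\<omega>. vbar g al Y m \<omega> * Y j \<omega>)" "integrable M (\<lambda>\<omega>. Y (Suc m) \<omega> * Y j \<omega>)"
    using Suc.prems vbar_measurable vbar_square_integrable noise_measurable noise_square_integrable
    by (auto intro!: integrable_mult_of_squares)
  then show ?case
    using Suc noise_uncorrelated[of "Suc m" j] by (simp add: vbar_Suc_eq algebra_simps)
qed simp

lemma vbar_second_moment: "(\<integral>\<omega>. (vbar g al Y m \<omega>)\<^sup>2 \<partial>M) = \<sigma>\<^sup>2 * lam g al m"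
proof (induction m)
  case (Suc m)
  have "(\<integral>\<omega>. ((1 - (1 - g) * al m) * vbar g al Y m \<omega> + al m * Y (Suc m) \<omega> + 0)\<^sup>2 \<partial>M)
      = (1 - (1 - g) * al m)\<^sup>2 * (\<integral>\<omega>. (vbar g al Y m \<omega>)\<^sup>2 \<partial>M) + (al m)\<^sup>2 * \<sigma>\<^sup>2"
    using vbar_measurable noise_measurable vbar_square_integrable noise_square_integrable
      vbar_mean noise_mean vbar_uncorrelated_future noise_variance
    by (subst integral_square_orthogonal_sum) auto
  then show ?case
    using Suc by (simp add: vbar_Suc_eq algebra_simps)
qed simp

end

lemma (in prob_space) white_noise_centered:
  fixes X :: "nat \<Rightarrow> 'a \<Rightarrow> real"
  assumes measurable: "\<And>i. 1 \<le> i \<Longrightarrow> X i \<in> borel_measurable M"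
    and square_integrable: "\<And>i. 1 \<le> i \<Longrightarrow> integrable M (\<lambda>\<omega>. (X i \<omega>)\<^sup>2)"
    and mean: "\<And>i. 1 \<le> i \<Longrightarrow> (\<integral>\<omega>. X i \<omega> \<partial>M) = c"
    and variance: "\<And>i. 1 \<le> i \<Longrightarrow> (\<integral>\<omega>. (X i \<omega> - c)\<^sup>2 \<partial>M) = \<sigma>\<^sup>2"
    and uncorrelated: "\<And>i j. 1 \<le> i \<Longrightarrow> i < j \<Longrightarrow> (\<integral>\<omega>. (X i \<omega> - c) * (X j \<omega> - c) \<partial>M) = 0"
  shows "white_noise M (\<lambda>i \<omega>. X i \<omega> - c) \<sigma>"
proof unfold_locales
  fix i :: nat
  assume "1 \<le> i"
  then show "(\<lambda>\<omega>. X i \<omega> - c) \<in> borel_measurable M"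
    using measurable by simp
  show "integrable M (\<lambda>\<omega>. (X i \<omega> - c)\<^sup>2)"
    using square_integrable_affine_comb[of "X i" "X i" 1 0 "-c"] measurable square_integrable \<open>1 \<le> i\<close>
    by simp
  show "(\<integral>\<omega>. X i \<omega> - c \<partial>M) = 0"
    using square_integrable_imp_integrable[OF measurable square_integrable] mean \<open>1 \<le> i\<close>
    by (simp add: prob_space)
qed (use variance uncorrelated in simp_all)

lemma (in prob_space) vbar_last_mean_squared_error:
  fixes X :: "nat \<Rightarrow> 'a \<Rightarrow> real"
  assumes "white_noise M (\<lambda>i \<omega>. X i \<omega> - c) \<sigma>" and "1 \<le> n"
  shows "(\<integral>\<omega>. (vbar_last g al X n a \<omega> - (\<integral>\<omega>'. vhat g al X n \<omega>' \<partial>M))\<^sup>2 \<partial>M)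
    = (1 - (1 - g) * a)\<^sup>2 * \<sigma>\<^sup>2 * lam g al (n - 1) + a\<^sup>2 * \<sigma>\<^sup>2
      + (1 - a)\<^sup>2 * ((1 - (1 - g) * delta g al (n - 1))\<^sup>2 * c\<^sup>2)"
proof -
  define Y where "Y i \<omega> = X i \<omega> - c" for i \<omega>
  define V where "V = vbar g al Y (n - 1)"
  define D where "D = delta g al (n - 1)"
  interpret white_noise M Y \<sigma>
    using assms(1) by (simp add: Y_def[abs_def])
  have vbar_X: "vbar g al X (n - 1) \<omega> = V \<omega> + c * D" for \<omega>
    using vbar_add_const[of g al Y c "n - 1" \<omega>] by (simp add: Y_def V_def D_def)
  have vhat: "vhat g al X n \<omega> = g * V \<omega> + 1 * Y n \<omega> + c * (1 + g * D)" for \<omega>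
    unfolding vhat_def vbar_X by (simp add: Y_def algebra_simps)
  have vhat_mean: "(\<integral>\<omega>. vhat g al X n \<omega> \<partial>M) = c * (1 + g * D)"
    using vbar_integrable vbar_mean noise_integrable noise_mean \<open>1 \<le> n\<close>
    by (simp add: vhat V_def prob_space)
  have "vbar_last g al X n a \<omega> - c * (1 + g * D)
      = (1 - (1 - g) * a) * V \<omega> + a * Y n \<omega> + (a - 1) * (c * (1 - (1 - g) * D))" for \<omega>
    unfolding vbar_last_def vhat vbar_X by (simp add: algebra_simps)
  then have "(\<integral>\<omega>. (vbar_last g al X n a \<omega> - (\<integral>\<omega>'. vhat g al X n \<omega>' \<partial>M))\<^sup>2 \<partial>M)
      = (\<integral>\<omega>. ((1 - (1 - g) * a) * V \<omega> + a * Y n \<omega> + (a - 1) * (c * (1 - (1 - g) * D)))\<^sup>2 \<partial>M)"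
    by (simp only: vhat_mean)
  also have "\<dots> = (1 - (1 - g) * a)\<^sup>2 * (\<sigma>\<^sup>2 * lam g al (n - 1)) + a\<^sup>2 * \<sigma>\<^sup>2
      + ((a - 1) * (c * (1 - (1 - g) * D)))\<^sup>2"
    using vbar_measurable vbar_square_integrable vbar_mean
      vbar_uncorrelated_future vbar_second_moment noise_measurable
      noise_square_integrable noise_mean noise_variance \<open>1 \<le> n\<close>
    by (subst integral_square_orthogonal_sum) (auto simp: V_def)
  also have "\<dots> = (1 - (1 - g) * a)\<^sup>2 * \<sigma>\<^sup>2 * lam g al (n - 1) + a\<^sup>2 * \<sigma>\<^sup>2
      + (1 - a)\<^sup>2 * ((1 - (1 - g) * D)\<^sup>2 * c\<^sup>2)"
    by (simp add: power_mult_distrib power2_commute[of a 1] mult_ac)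
  finally show ?thesis
    unfolding D_def .
qed

lemma stepsize_loss_unique_minimizer:
  fixes f :: "real \<Rightarrow> real" and b s L K :: real
  assumes f: "\<And>a. f a = (1 - b * a)\<^sup>2 * s * L + a\<^sup>2 * s + (1 - a)\<^sup>2 * K"
    and "0 < s" "0 \<le> L" "0 \<le> K" "0 \<le> b" and stable: "b * (1 - b) * L \<le> 1"
  defines "A \<equiv> (b * L * s + K) / (b\<^sup>2 * L * s + K + s)"
  shows "A \<in> {0..1} \<and> (\<forall>a. a \<noteq> A \<longrightarrow> f A < f a)"
proof -
  define Q N where "Q = b\<^sup>2 * L * s + K + s" and "N = b * L * s + K"
  have Q: "0 < Q" and N: "0 \<le> N"
    using assms(2-5) by (simp_all add: Q_def N_def add_nonneg_pos)
  have "b * (1 - b) * L * s \<le> 1 * s"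
    using stable \<open>0 < s\<close> by (intro mult_right_mono) auto
  then have "N \<le> Q"
    by (simp add: Q_def N_def power2_eq_square algebra_simps)
  then have "A \<in> {0..1}"
    using Q N by (simp add: A_def Q_def N_def)
  moreover have "f A < f a" if "a \<noteq> A" for a
  proof -
    have expand: "f x = Q * x\<^sup>2 - 2 * N * x + (L * s + K)" for x
      by (simp add: f Q_def N_def power2_eq_square algebra_simps)
    have "N = Q * A"
      using Q by (simp add: A_def Q_def N_def)
    then have "f a - f A = Q * (a - A)\<^sup>2"
      unfolding expand by (simp add: power2_eq_square algebra_simps)
    moreover have "0 < Q * (a - A)\<^sup>2"
      using Q that by simp
    ultimately show ?thesis
      by simp
  qed
  ultimately show ?thesis
    by blast
qed

theorem theorem3:
  fixes M :: "'a measure" and X :: "nat \<Rightarrow> 'a \<Rightarrow> real"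
    and \<gamma> c \<sigma> :: real and n :: nat and \<alpha> :: "nat \<Rightarrow> real"
  assumes "prob_space M"
    and "\<gamma> \<in> {0<..<1}"
    and indep: "prob_space.indep_vars M (\<lambda>_. borel) X {1..}"
    and ident: "\<And>i. i \<ge> 1 \<Longrightarrow> distr M borel (X i) = distr M borel (X 1)"
    and "\<And>i. i \<ge> 1 \<Longrightarrow> integrable M (X i)"
    and "\<And>i. i \<ge> 1 \<Longrightarrow> integrable M (\<lambda>\<omega>. (X i \<omega>)\<^sup>2)"
    and mean: "\<And>i. i \<ge> 1 \<Longrightarrow> (\<integral>\<omega>. X i \<omega> \<partial>M) = c"
    and var: "\<And>i. i \<ge> 1 \<Longrightarrow> (\<integral>\<omega>. (X i \<omega> - c)\<^sup>2 \<partial>M) = \<sigma>\<^sup>2"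
    and "\<sigma> > 0"
    and "n \<ge> 2"
    and steps: "\<And>m. m \<le> n - 2 \<Longrightarrow> \<alpha> m \<in> {0..1}"
  shows
    "let F = (\<lambda>a. \<integral>\<omega>. (vbar_last \<gamma> \<alpha> X n a \<omega> - (\<integral>\<omega>'. vhat \<gamma> \<alpha> X n \<omega>' \<partial>M))\<^sup>2 \<partial>M);
         L = lam \<gamma> \<alpha> (n - 1); D = delta \<gamma> \<alpha> (n - 1);
         A = ((1 - \<gamma>) * L * \<sigma>\<^sup>2 + (1 - (1 - \<gamma>) * D)\<^sup>2 * c\<^sup>2) /
             ((1 - \<gamma>)\<^sup>2 * L * \<sigma>\<^sup>2 + (1 - (1 - \<gamma>) * D)\<^sup>2 * c\<^sup>2 + \<sigma>\<^sup>2)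
     in A \<in> {0..1} \<and> (\<forall>a\<in>{0..1}. a \<noteq> A \<longrightarrow> F A < F a)"
proof -
  interpret prob_space M by fact
  have measurable: "X i \<in> borel_measurable M" if "1 \<le> i" for i
    using assms(5)[OF that] by (rule borel_measurable_integrable)
  have "indep_vars (\<lambda>_. borel) (\<lambda>i \<omega>. X i \<omega> - c) {1..}"
    by (rule indep_vars_compose2[OF indep]) auto
  then have uncorrelated: "(\<integral>\<omega>. (X i \<omega> - c) * (X j \<omega> - c) \<partial>M) = 0" if "1 \<le> i" "i < j" for i j
    using that assms(5) mean by (subst indep_vars_integral_mult) (auto simp: prob_space)
  have "white_noise M (\<lambda>i \<omega>. X i \<omega> - c) \<sigma>"
    using measurable assms(6) mean var uncorrelated by (rule white_noise_centered)
  then have mse: "(\<integral>\<omega>. (vbar_last \<gamma> \<alpha> X n a \<omega> - (\<integral>\<omega>'. vhat \<gamma> \<alpha> X n \<omega>' \<partial>M))\<^sup>2 \<partial>M)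
      = (1 - (1 - \<gamma>) * a)\<^sup>2 * \<sigma>\<^sup>2 * lam \<gamma> \<alpha> (n - 1) + a\<^sup>2 * \<sigma>\<^sup>2
        + (1 - a)\<^sup>2 * ((1 - (1 - \<gamma>) * delta \<gamma> \<alpha> (n - 1))\<^sup>2 * c\<^sup>2)" for a
    using \<open>n \<ge> 2\<close> by (intro vbar_last_mean_squared_error) auto
  have "(1 - \<gamma>) * (1 - (1 - \<gamma>)) * lam \<gamma> \<alpha> (n - 1) \<le> (1 - \<gamma>\<^sup>2) * lam \<gamma> \<alpha> (n - 1)"
    using assms(2) lam_nonneg by (intro mult_right_mono) (simp_all add: power2_eq_square algebra_simps)
  also have "\<dots> \<le> 1"
    using assms(2) steps lam_mult_one_minus_square_le_1[of \<gamma> "n - 1" \<alpha>] by (simp add: mult.commute)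
  finally have stable: "(1 - \<gamma>) * (1 - (1 - \<gamma>)) * lam \<gamma> \<alpha> (n - 1) \<le> 1" .
  have "0 < \<sigma>\<^sup>2" "0 \<le> 1 - \<gamma>" "0 \<le> (1 - (1 - \<gamma>) * delta \<gamma> \<alpha> (n - 1))\<^sup>2 * c\<^sup>2"
    using \<open>\<sigma> > 0\<close> assms(2) by simp_all
  from stepsize_loss_unique_minimizer[OF mse \<open>0 < \<sigma>\<^sup>2\<close> lam_nonneg this(3,2) stable]
  show ?thesis
    unfolding Let_def by blast
qed

end
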